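(* Let $a,b$ be complex numbers such that $j^2-aj-b^2\neq 0$ for every positive integer $j$. Then $$\sum_{k=1}^{\infty}\frac{1}{k^2-ak-b^2}=\sum_{k=1}^{\infty}\frac{3k-a}{k\binom{2k}{k}}\cdot\frac{\prod_{j=1}^{k-1}(j^2-a^2-4b^2)}{\prod_{j=1}^{k}(j^2-aj-b^2)}.$$
   Context: The left-hand side equals the generating function $\sum_{r\ge0}\sum_{s\ge0}\binom{r+s}{r}\zeta(2+r+2s)a^rb^{2s}$ for small $|a|,|b|$. *)

theory Defs
  imports "HOL-Analysis.Analysis"
begin

end

theory Submission
  imports Defs "HOL-Real_Asymp.Real_Asymp"
begin

(* Markov-WZ acceleration. Write Q(j) = j^2 - a j - b^2 and
     F(n,k) = c(n) / (Q(k) Q(k+1) ... Q(k+n)),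
     G(n,k) = c(n) (2k + 3n + 1 - a) / (2 (2n+1) Q(k) Q(k+1) ... Q(k+n)),
     c(n) = prod_{j=1..n} (j^2 - a^2 - 4 b^2) / binom(2n, n).
   The left-hand side is the row sum S(0), where S(n) = sum_{k>=1} F(n,k), and G(n,1) is the
   n-th term of the right-hand side. The pair satisfies F(n,k) - F(n+1,k) = G(n,k) - G(n,k+1),
   which after clearing denominators is a polynomial identity. Summing over k gives
   S(n) = G(n,1) + S(n+1), so S(0) = G(0,1) + ... + G(N-1,1) + S(N), and S(N) -> 0: for large n
   the ratio c(n+1)/c(n) ~ n^2/4 is beaten by Q(k+n+1) ~ (k+n)^2, so |F(n+1,k)| <= 3/4 |F(n,k)|
   uniformly in k. *)

lemma sums_of_WZ_pair:
  fixes F G :: "nat \<Rightarrow> nat \<Rightarrow> 'a::real_normed_vector"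
  assumes pair: "\<And>n k. F n k - F (Suc n) k = G n k - G n (Suc k)"
    and summable: "\<And>n. summable (F n)"
    and G_lim: "\<And>n. G n \<longlonglongrightarrow> 0"
    and row_lim: "(\<lambda>n. suminf (F n)) \<longlonglongrightarrow> 0"
  shows "(\<lambda>n. G n 0) sums suminf (F 0)"
proof -
  have step: "suminf (F n) - suminf (F (Suc n)) = G n 0" for n
  proof -
    have "(\<lambda>k. F n k - F (Suc n) k) sums G n 0"
      using telescope_sums'[OF G_lim[of n]] by (simp add: pair)
    moreover have "(\<lambda>k. F n k - F (Suc n) k) sums (suminf (F n) - suminf (F (Suc n)))"
      using summable by (intro sums_diff summable_sums)
    ultimately show ?thesis by (rule sums_unique2[symmetric])
  qed
  have "(\<Sum>n<N. G n 0) = suminf (F 0) - suminf (F N)" for N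
    using sum_lessThan_telescope'[of "\<lambda>n. suminf (F n)"] by (simp add: step)
  moreover have "(\<lambda>N. suminf (F 0) - suminf (F N)) \<longlonglongrightarrow> suminf (F 0) - 0"
    by (intro tendsto_diff tendsto_const row_lim)
  ultimately show ?thesis
    unfolding sums_def by simp
qed

lemma Suc_times_central_binomial:
  "Suc n * (2 * Suc n choose Suc n) = 2 * (2 * n + 1) * (2 * n choose n)"
proof -
  have "2 * Suc n choose Suc n = (Suc (2 * n) choose n) + (Suc (2 * n) choose Suc n)"
    by (simp only: mult_Suc_right add_Suc_right binomial_Suc_Suc) simp
  also have "Suc (2 * n) choose n = Suc (2 * n) choose Suc n"
    using binomial_symmetric[of "Suc n" "Suc (2 * n)"] by simp
  finally have "Suc n * (2 * Suc n choose Suc n) = 2 * (Suc n * (Suc (2 * n) choose Suc n))"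
    by simp
  also have "\<dots> = 2 * (Suc (2 * n) * (2 * n choose n))"
    by (simp only: Suc_times_binomial)
  finally show ?thesis by simp
qed

(* The WZ relation for F and G below, multiplied by 2 (2n+1) Q(k) ... Q(k+n+1),
   with x = k and m = n + 1. *)
lemma WZ_certificate_identity:
  fixes a b x m :: "'a::comm_ring_1"
  defines "Q \<equiv> \<lambda>y. y^2 - a * y - b^2"
  shows "2 * (2 * m - 1) * Q (x + m) - m * (m^2 - a^2 - 4 * b^2)
    = (2 * x + 3 * m - 2 - a) * Q (x + m) - (2 * x + 3 * m - a) * Q x"
  unfolding Q_def by (simp add: algebra_simps power2_eq_square power3_eq_cube)

lemma norm_quadratic_ge:
  fixes a c :: "'a::real_normed_field" and x D :: real
  assumes "1 \<le> x" "0 \<le> D" "3 * norm a + 3 * norm c + 2 * D \<le> x"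
  shows "2/3 * (x^2 + D) \<le> norm (of_real x ^ 2 - a * of_real x - c)"
proof -
  have "x^2 \<le> norm (of_real x ^ 2 - a * of_real x - c) + norm a * x + norm c"
    using norm_triangle_ineq[of "of_real x ^ 2 - a * of_real x - c" "a * of_real x + c"]
      norm_triangle_ineq[of "a * of_real x" c] assms(1)
    by (simp add: norm_mult norm_power)
  moreover have "x * (3 * norm a + 3 * norm c + 2 * D) \<le> x * x"
    using assms by (intro mult_left_mono) auto
  moreover have "3 * norm c + 2 * D \<le> x * (3 * norm c + 2 * D)"
    using assms mult_right_mono[of 1 x "3 * norm c + 2 * D"] by simp
  ultimately show ?thesis by (simp add: power2_eq_square algebra_simps)
qed

lemma odd_of_nat_neq_0: "2 * of_nat n + 1 \<noteq> (0 :: 'a::semiring_char_0)"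
  using of_nat_neq_0[of "2 * n", where 'a='a] by (simp add: add.commute)

context
  fixes a b :: complex
begin

definition quad :: "nat \<Rightarrow> complex" where
  "quad j = (of_nat j)^2 - a * of_nat j - b^2"

definition quad_prod :: "nat \<Rightarrow> nat \<Rightarrow> complex" where
  "quad_prod n k = (\<Prod>i\<le>n. quad (k + i))"

definition WZ_coeff :: "nat \<Rightarrow> complex" where
  "WZ_coeff n = (\<Prod>j=1..n. (of_nat j)^2 - a^2 - 4 * b^2) / of_nat (2 * n choose n)"

definition WZ_F :: "nat \<Rightarrow> nat \<Rightarrow> complex" where
  "WZ_F n k = WZ_coeff n / quad_prod n k"

definition WZ_G :: "nat \<Rightarrow> nat \<Rightarrow> complex" where
  "WZ_G n k =
     WZ_coeff n / (2 * (2 * of_nat n + 1)) * (2 * of_nat k + 3 * of_nat n + 1 - a) / quad_prod n k"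

lemma quad_prod_Suc: "quad_prod (Suc n) k = quad_prod n k * quad (k + Suc n)"
  unfolding quad_prod_def by simp

lemma quad_prod_Suc_shift: "quad_prod (Suc n) k = quad k * quad_prod n (Suc k)"
  unfolding quad_prod_def by (subst prod.atMost_Suc_shift) simp

lemma WZ_coeff_Suc:
  "WZ_coeff (Suc n) = WZ_coeff n * of_nat (Suc n) * ((of_nat (Suc n))^2 - a^2 - 4 * b^2)
     / (2 * (2 * of_nat n + 1))"
proof -
  define P where "P = (\<Prod>j=1..n. (of_nat j)^2 - a^2 - 4 * b^2 :: complex)"
  define w where "w = ((of_nat (Suc n))^2 - a^2 - 4 * b^2 :: complex)"
  define m where "m = (of_nat (Suc n) :: complex)"
  define C where "C = (of_nat (2 * n choose n) :: complex)"
  define C' where "C' = (of_nat (2 * Suc n choose Suc n) :: complex)"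
  have nz: "C \<noteq> 0" "m \<noteq> 0" "2 * of_nat n + 1 \<noteq> (0 :: complex)"
    unfolding C_def m_def of_nat_eq_0_iff by (simp_all add: odd_of_nat_neq_0)
  have "m * C' = 2 * (2 * of_nat n + 1) * C"
    unfolding m_def C_def C'_def of_nat_mult[symmetric] Suc_times_central_binomial
    by (simp add: algebra_simps)
  then have C': "C' = 2 * (2 * of_nat n + 1) * C / m"
    using nz by (simp add: field_simps)
  have Suc_eq: "WZ_coeff (Suc n) = P * w / C'"
    unfolding WZ_coeff_def P_def w_def C'_def by (simp add: prod.nat_ivl_Suc' del: binomial_Suc_Suc)
  have eq: "WZ_coeff n = P / C"
    unfolding WZ_coeff_def P_def C_def ..
  show ?thesis
    using nz unfolding Suc_eq eq w_def[symmetric] unfolding m_def[symmetric] C'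
    by (simp add: field_simps)
qed

lemma WZ_F_Suc:
  "WZ_F (Suc n) k = WZ_F n k * of_nat (Suc n) * ((of_nat (Suc n))^2 - a^2 - 4 * b^2)
     / (2 * (2 * of_nat n + 1) * quad (k + Suc n))"
  unfolding WZ_F_def WZ_coeff_Suc quad_prod_Suc by (simp add: field_simps)

lemma quad_prod_neq_0:
  assumes "\<And>j. 1 \<le> j \<Longrightarrow> quad j \<noteq> 0" "1 \<le> k"
  shows "quad_prod n k \<noteq> 0"
  using assms unfolding quad_prod_def by (simp add: prod_zero_iff)

lemma WZ_pair:
  assumes nz: "\<And>j. 1 \<le> j \<Longrightarrow> quad j \<noteq> 0" and k: "1 \<le> k"
  shows "WZ_F n k - WZ_F (Suc n) k = WZ_G n k - WZ_G n (Suc k)"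
proof -
  define x where "x = (of_nat k :: complex)"
  define m where "m = (of_nat (Suc n) :: complex)"
  define Q where "Q = (\<lambda>y. y^2 - a * y - b^2)"
  define r where "r = WZ_coeff n / (2 * (2 * of_nat n + 1))"
  define D where "D = quad_prod n k"
  have Qk: "quad k = Q x" and Qkm: "quad (k + Suc n) = Q (x + m)"
    unfolding quad_def Q_def x_def m_def by (simp_all add: ac_simps)
  have odd: "2 * of_nat n + 1 = 2 * m - 1"
    unfolding m_def by simp
  have nz': "D \<noteq> 0" "Q x \<noteq> 0" "Q (x + m) \<noteq> 0"
    using quad_prod_neq_0[OF nz k] nz[of k] nz[of "k + Suc n"] k
    unfolding D_def Qk Qkm by simp_all
  have D': "quad_prod n (Suc k) = D * Q (x + m) / Q x"
    using quad_prod_Suc[of n k] quad_prod_Suc_shift[of n k] nz'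
    unfolding D_def Qk Qkm by (simp add: field_simps)
  have F: "WZ_F n k = 2 * (2 * m - 1) * r / D"
  proof -
    have "2 * (2 * of_nat n + 1) \<noteq> (0 :: complex)"
      by (metis mult_eq_0_iff odd_of_nat_neq_0 zero_neq_numeral)
    then show ?thesis
      unfolding WZ_F_def r_def D_def odd[symmetric] times_divide_eq_right
      by (subst nonzero_mult_div_cancel_left) auto
  qed
  have F_Suc: "WZ_F (Suc n) k = r * m * (m^2 - a^2 - 4 * b^2) / (D * Q (x + m))"
    unfolding WZ_F_Suc unfolding WZ_F_def r_def D_def[symmetric] Qkm m_def
    by (simp add: divide_inverse ac_simps)
  have "2 * of_nat k + 3 * of_nat n + 1 - a = 2 * x + 3 * m - 2 - a"
    "2 * of_nat (Suc k) + 3 * of_nat n + 1 - a = 2 * x + 3 * m - a"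
    unfolding x_def m_def by (simp_all add: algebra_simps)
  then have G: "WZ_G n k = r * (2 * x + 3 * m - 2 - a) / D"
    and G_Suc: "WZ_G n (Suc k) = r * (2 * x + 3 * m - a) / (D * Q (x + m) / Q x)"
    unfolding WZ_G_def r_def D_def[symmetric] D'[symmetric] by simp_all
  have "WZ_F n k - WZ_F (Suc n) k
      = r * (2 * (2 * m - 1) * Q (x + m) - m * (m^2 - a^2 - 4 * b^2)) / (D * Q (x + m))"
    unfolding F F_Suc using nz' by (simp add: field_simps)
  also have "\<dots> = r * ((2 * x + 3 * m - 2 - a) * Q (x + m) - (2 * x + 3 * m - a) * Q x)
      / (D * Q (x + m))"
    unfolding Q_def WZ_certificate_identity ..
  also have "\<dots> = WZ_G n k - WZ_G n (Suc k)"
    unfolding G G_Suc using nz' by (simp add: field_simps)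
  finally show ?thesis .
qed

definition quad_threshold :: nat where
  "quad_threshold = nat \<lceil>3 * norm a + 3 * norm (b^2) + 2 * norm (a^2 + 4 * b^2)\<rceil> + 2"

lemma norm_quad_ge:
  assumes "quad_threshold \<le> j"
  shows "2/3 * (real j ^ 2 + norm (a^2 + 4 * b^2)) \<le> norm (quad j)"
proof -
  have "3 * norm a + 3 * norm (b^2) + 2 * norm (a^2 + 4 * b^2) \<le> real j"
    using assms real_nat_ceiling_ge[of "3 * norm a + 3 * norm (b^2) + 2 * norm (a^2 + 4 * b^2)"]
    unfolding quad_threshold_def by linarith
  moreover have "1 \<le> real j"
    using assms unfolding quad_threshold_def by simp
  ultimately show ?thesis
    using norm_quadratic_ge[of "real j" "norm (a^2 + 4 * b^2)" a "b^2"] unfolding quad_def by simp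
qed

lemma norm_quad_prod_ge:
  assumes "quad_threshold \<le> k"
  shows "2/3 * real k ^ 2 \<le> norm (quad_prod n k)"
proof (induction n)
  case 0
  have "2/3 * real k ^ 2 \<le> 2/3 * (real k ^ 2 + norm (a^2 + 4 * b^2))"
    by simp
  also have "\<dots> \<le> norm (quad k)"
    by (rule norm_quad_ge[OF assms])
  finally show ?case
    by (simp add: quad_prod_def)
next
  case (Suc n)
  have "2 \<le> real (k + Suc n)"
    using assms unfolding quad_threshold_def by simp
  then have "1 \<le> 2/3 * real (k + Suc n) ^ 2"
    using power_mono[of 2 "real (k + Suc n)" 2] by simp
  also have "\<dots> \<le> 2/3 * (real (k + Suc n) ^ 2 + norm (a^2 + 4 * b^2))"
    by simp
  also have "\<dots> \<le> norm (quad (k + Suc n))"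
    using assms by (intro norm_quad_ge) simp
  finally have "norm (quad_prod n k) \<le> norm (quad_prod (Suc n) k)"
    unfolding quad_prod_Suc norm_mult using mult_left_mono[of 1] by fastforce
  with Suc show ?case by simp
qed

lemma norm_WZ_F_Suc_le:
  assumes "quad_threshold \<le> Suc n"
  shows "norm (WZ_F (Suc n) k) \<le> 3/4 * norm (WZ_F n k)"
proof -
  define m where "m = real (Suc n)"
  define w where "w = norm ((of_nat (Suc n))^2 - a^2 - 4 * b^2 :: complex)"
  define q where "q = norm (quad (k + Suc n))"
  have "m^2 \<le> real (k + Suc n) ^ 2"
    unfolding m_def by (intro power_mono) simp_all
  then have q: "2/3 * (m^2 + norm (a^2 + 4 * b^2)) \<le> q"
    using norm_quad_ge[of "k + Suc n"] assms unfolding q_def by simp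
  have "w \<le> m^2 + norm (a^2 + 4 * b^2)"
    unfolding w_def m_def using norm_triangle_ineq4[of "(of_nat (Suc n))^2" "a^2 + 4 * b^2"]
    by (simp add: diff_diff_eq norm_power del: of_nat_Suc)
  moreover have "0 < 2/3 * (m^2 + norm (a^2 + 4 * b^2))"
    unfolding m_def by (intro mult_pos_pos add_pos_nonneg) simp_all
  ultimately have wq: "w / q \<le> 3/2"
    using q by (simp add: pos_divide_le_eq)
  have mn: "m / (2 * (2 * real n + 1)) \<le> 1/2"
    unfolding m_def by simp
  have odd: "(2 * (2 * of_nat n + 1) :: complex) = of_nat (2 * (2 * n + 1))"
    by simp
  have "norm (WZ_F (Suc n) k) = norm (WZ_F n k) * (m / (2 * (2 * real n + 1))) * (w / q)"
    unfolding WZ_F_Suc odd unfolding norm_mult norm_divide norm_of_nat w_def q_def m_def by simp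
  also have "\<dots> \<le> norm (WZ_F n k) * (1/2) * (3/2)"
    using wq mn by (intro mult_mono mult_left_mono) (simp_all add: w_def q_def m_def)
  finally show ?thesis by simp
qed

lemma norm_inverse_quad_prod_le:
  assumes "quad_threshold \<le> k"
  shows "norm (inverse (quad_prod n k)) \<le> 3/2 * inverse (real k ^ 2)"
proof -
  have "0 < 2/3 * real k ^ 2"
    using assms unfolding quad_threshold_def by simp
  then have "inverse (norm (quad_prod n k)) \<le> inverse (2/3 * real k ^ 2)"
    using norm_quad_prod_ge[OF assms] by (rule le_imp_inverse_le[rotated])
  also have "\<dots> = 3/2 * inverse (real k ^ 2)"
    by (simp add: inverse_eq_divide)
  finally show ?thesis
    by (simp add: norm_inverse)
qed

lemma summable_norm_WZ_F: "summable (\<lambda>k. norm (WZ_F n (Suc k)))"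
proof -
  have "summable (\<lambda>k. norm (WZ_coeff n) * (3/2 * inverse (real k ^ 2)))"
    by (intro summable_mult summable_mult inverse_power_summable) simp
  then have "summable (\<lambda>k. norm (WZ_F n k))"
  proof (rule summable_comparison_test'[where N = quad_threshold])
    fix k assume "quad_threshold \<le> k"
    then have "norm (WZ_F n k) \<le> norm (WZ_coeff n) * (3/2 * inverse (real k ^ 2))"
      unfolding WZ_F_def divide_inverse[of "WZ_coeff n"] norm_mult
      by (rule mult_left_mono[OF norm_inverse_quad_prod_le]) simp_all
    then show "norm (norm (WZ_F n k)) \<le> norm (WZ_coeff n) * (3/2 * inverse (real k ^ 2))"
      by simp
  qed
  then show ?thesis
    by (subst summable_Suc_iff)
qed

lemma WZ_G_tendsto_0: "WZ_G n \<longlonglongrightarrow> 0"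
proof (rule Lim_null_comparison)
  define C where "C = norm (WZ_coeff n / (2 * (2 * of_nat n + 1)))"
  define c where "c = norm (3 * of_nat n + 1 - a)"
  show "\<forall>\<^sub>F k in sequentially.
          norm (WZ_G n k) \<le> C * (2 * real k + c) * (3/2 * inverse (real k ^ 2))"
    using eventually_ge_at_top[of quad_threshold]
  proof eventually_elim
    case (elim k)
    have G_eq: "WZ_G n k = WZ_coeff n / (2 * (2 * of_nat n + 1))
        * (2 * of_nat k + (3 * of_nat n + 1 - a)) * inverse (quad_prod n k)"
      unfolding WZ_G_def by (simp add: divide_inverse algebra_simps)
    have "norm (2 * of_nat k + (3 * of_nat n + 1 - a)) \<le> 2 * real k + c"
      unfolding c_def using norm_triangle_ineq[of "2 * of_nat k" "3 * of_nat n + 1 - a"] by simp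
    then show ?case
      unfolding G_eq norm_mult C_def using norm_inverse_quad_prod_le[OF elim]
      by (intro mult_mono) (simp_all add: c_def)
  qed
  show "(\<lambda>k. C * (2 * real k + c) * (3/2 * inverse (real k ^ 2))) \<longlonglongrightarrow> 0"
    by real_asymp
qed

lemma norm_WZ_F_geometric_decay:
  assumes "quad_threshold \<le> N"
  shows "norm (WZ_F N k) \<le> (3/4) ^ (N - quad_threshold) * norm (WZ_F quad_threshold k)"
  using assms
proof (induction N rule: dec_induct)
  case (step N)
  have "norm (WZ_F (Suc N) k) \<le> 3/4 * norm (WZ_F N k)"
    using step.hyps by (intro norm_WZ_F_Suc_le) simp
  also have "\<dots> \<le> 3/4 * ((3/4) ^ (N - quad_threshold) * norm (WZ_F quad_threshold k))"
    using step.IH by simp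
  finally show ?case
    using step.hyps by (simp add: Suc_diff_le)
qed simp

lemma WZ_row_sum_tendsto_0: "(\<lambda>n. \<Sum>k. WZ_F n (Suc k)) \<longlonglongrightarrow> 0"
proof (rule Lim_null_comparison)
  define M where "M = quad_threshold"
  define C where "C = (\<Sum>k. norm (WZ_F M (Suc k)))"
  show "\<forall>\<^sub>F N in sequentially. norm (\<Sum>k. WZ_F N (Suc k)) \<le> (3/4) ^ (N - M) * C"
    using eventually_ge_at_top[of M]
  proof eventually_elim
    case (elim N)
    have "norm (\<Sum>k. WZ_F N (Suc k)) \<le> (\<Sum>k. norm (WZ_F N (Suc k)))"
      by (rule summable_norm) (rule summable_norm_WZ_F)
    also have "\<dots> \<le> (\<Sum>k. (3/4) ^ (N - M) * norm (WZ_F M (Suc k)))"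
      using elim unfolding M_def
      by (intro suminf_le norm_WZ_F_geometric_decay summable_norm_WZ_F summable_mult)
    also have "\<dots> = (3/4) ^ (N - M) * C"
      unfolding C_def by (rule suminf_mult) (rule summable_norm_WZ_F)
    finally show ?case .
  qed
  have "(\<lambda>N. (3/4) ^ (N + M - M) * C) \<longlonglongrightarrow> 0"
    by (simp add: LIMSEQ_realpow_zero tendsto_mult_left_zero)
  then show "(\<lambda>N. (3/4) ^ (N - M) * C) \<longlonglongrightarrow> 0"
    by (rule LIMSEQ_offset)
qed

lemma WZ_F_0: "WZ_F 0 k = 1 / quad k"
  unfolding WZ_F_def WZ_coeff_def quad_prod_def by simp

lemma WZ_G_1:
  "WZ_G n 1 = (3 * of_nat (n+1) - a) / (of_nat (n+1) * of_nat ((2*(n+1)) choose (n+1)))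
     * (\<Prod>j=1..n. (of_nat j)^2 - a^2 - 4 * b^2) / (\<Prod>j=1..n+1. quad j)"
proof -
  have "quad_prod n 1 = (\<Prod>j=1..n+1. quad j)"
    unfolding quad_prod_def atMost_atLeast0 using prod.shift_bounds_cl_Suc_ivl[of quad 0 n] by simp
  moreover have "(of_nat (n+1) * of_nat ((2*(n+1)) choose (n+1)) :: complex)
      = 2 * (2 * of_nat n + 1) * of_nat (2 * n choose n)"
    unfolding of_nat_mult[symmetric] Suc_eq_plus1[symmetric] Suc_times_central_binomial
    by (simp add: algebra_simps)
  moreover have "2 * of_nat 1 + 3 * of_nat n + 1 - a = 3 * of_nat (n+1) - (a :: complex)"
    by simp
  ultimately show ?thesis
    unfolding WZ_G_def WZ_coeff_def by (simp add: divide_inverse inverse_mult_distrib ac_simps)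
qed

end

theorem mainTheorem1:
  fixes a b :: complex
  assumes nz: "\<And>j::nat. j \<ge> 1 \<Longrightarrow> (of_nat j)^2 - a * of_nat j - b^2 \<noteq> 0"
  shows "summable (\<lambda>k::nat. 1 / ((of_nat (k+1))^2 - a * of_nat (k+1) - b^2))
    \<and> summable (\<lambda>k::nat. (3 * of_nat (k+1) - a) / (of_nat (k+1) * of_nat ((2*(k+1)) choose (k+1)))
          * (\<Prod>j=1..k. (of_nat j)^2 - a^2 - 4 * b^2)
          / (\<Prod>j=1..k+1. (of_nat j)^2 - a * of_nat j - b^2))
    \<and> (\<Sum>k::nat. 1 / ((of_nat (k+1))^2 - a * of_nat (k+1) - b^2))
      = (\<Sum>k::nat. (3 * of_nat (k+1) - a) / (of_nat (k+1) * of_nat ((2*(k+1)) choose (k+1)))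
          * (\<Prod>j=1..k. (of_nat j)^2 - a^2 - 4 * b^2)
          / (\<Prod>j=1..k+1. (of_nat j)^2 - a * of_nat j - b^2))"
proof -
  have "(\<lambda>n. WZ_G a b n (Suc 0)) sums (\<Sum>k. WZ_F a b 0 (Suc k))"
  proof (rule sums_of_WZ_pair[where F = "\<lambda>n k. WZ_F a b n (Suc k)"
                               and G = "\<lambda>n k. WZ_G a b n (Suc k)"])
    show "WZ_F a b n (Suc k) - WZ_F a b (Suc n) (Suc k)
        = WZ_G a b n (Suc k) - WZ_G a b n (Suc (Suc k))" for n k
      using nz by (intro WZ_pair) (simp_all add: quad_def)
    show "summable (\<lambda>k. WZ_F a b n (Suc k))" for n
      by (rule summable_norm_cancel) (rule summable_norm_WZ_F)
    show "(\<lambda>k. WZ_G a b n (Suc k)) \<longlonglongrightarrow> 0" for n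
      using WZ_G_tendsto_0 by (rule LIMSEQ_Suc)
  qed (rule WZ_row_sum_tendsto_0)
  moreover have "summable (\<lambda>k. WZ_F a b 0 (Suc k))"
    by (rule summable_norm_cancel) (rule summable_norm_WZ_F)
  ultimately show ?thesis
    unfolding One_nat_def[symmetric] WZ_G_1 WZ_F_0 quad_def by (simp add: sums_iff)
qed

end
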